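(* Let $\mathcal F\subseteq\mathcal O(A)$ be a conservative clone with $\mathrm r(\mathcal F)=r\ge3$. Let $n$ be a natural number, $\mathbf a\in A^n_{<r}$, $f\in\mathcal F_{[n]}$, and $\sigma\colon A\to A$ an arbitrary function. Then $f(\sigma(\mathbf a))=\sigma(f(\mathbf a))$, where $\sigma(\mathbf a)$ is applied componentwise.
   Context: $\mathcal O(A)=\bigcup_{n<\omega}A^{A^n}$; $\mathcal F_{[n]}=\mathcal F\cap A^{A^n}$. $\mathrm{ran}\,\mathbf a$ is the set of entries of $\mathbf a\in A^n$; $A^n_{<r}=\{\mathbf a\in A^n:|\mathrm{ran}\,\mathbf a|<r\}$. A clone with carrier $A$ is a subset of $\mathcal O(A)$ containing all projections and closed under composition; it is conservative if $f(\mathbf a)\in\mathrm{ran}\,\mathbf a$ for all its members $f$ and all $\mathbf a$. $\mathrm r(\mathcal F)$ is the least $r$ such that $\mathcal F$ contains an $r$-ary function that is not a projection ($\omega$ if there is none). *)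

theory Defs
  imports "HOL-Library.FuncSet" "HOL-Library.Extended_Nat"
begin

definition tuples :: "'a set \<Rightarrow> nat \<Rightarrow> (nat \<Rightarrow> 'a) set" where
  "tuples A n = PiE {..<n} (\<lambda>_. A)"

definition ops :: "'a set \<Rightarrow> nat \<Rightarrow> ((nat \<Rightarrow> 'a) \<Rightarrow> 'a) set" where
  "ops A n = tuples A n \<rightarrow>\<^sub>E A"

definition allops :: "'a set \<Rightarrow> (nat \<times> ((nat \<Rightarrow> 'a) \<Rightarrow> 'a)) set" where
  "allops A = {(n, f). f \<in> ops A n}"

definition proj :: "'a set \<Rightarrow> nat \<Rightarrow> nat \<Rightarrow> ((nat \<Rightarrow> 'a) \<Rightarrow> 'a)" where
  "proj A n i = (\<lambda>x\<in>tuples A n. x i)"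

definition is_proj :: "'a set \<Rightarrow> nat \<Rightarrow> ((nat \<Rightarrow> 'a) \<Rightarrow> 'a) \<Rightarrow> bool" where
  "is_proj A n f \<longleftrightarrow> (\<exists>i<n. f = proj A n i)"

definition comp_op :: "'a set \<Rightarrow> nat \<Rightarrow> nat \<Rightarrow> ((nat \<Rightarrow> 'a) \<Rightarrow> 'a)
    \<Rightarrow> (nat \<Rightarrow> ((nat \<Rightarrow> 'a) \<Rightarrow> 'a)) \<Rightarrow> ((nat \<Rightarrow> 'a) \<Rightarrow> 'a)" where
  "comp_op A n m f g = (\<lambda>x\<in>tuples A m. f (\<lambda>i\<in>{..<n}. g i x))"

definition clone :: "'a set \<Rightarrow> (nat \<times> ((nat \<Rightarrow> 'a) \<Rightarrow> 'a)) set \<Rightarrow> bool" where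
  "clone A F \<longleftrightarrow> F \<subseteq> allops A
     \<and> (\<forall>n i. i < n \<longrightarrow> (n, proj A n i) \<in> F)
     \<and> (\<forall>n m f g. (n, f) \<in> F \<and> (\<forall>i<n. (m, g i) \<in> F) \<longrightarrow> (m, comp_op A n m f g) \<in> F)"

definition conservative :: "'a set \<Rightarrow> (nat \<times> ((nat \<Rightarrow> 'a) \<Rightarrow> 'a)) set \<Rightarrow> bool" where
  "conservative A F \<longleftrightarrow> (\<forall>(n, f) \<in> F. \<forall>a \<in> tuples A n. f a \<in> a ` {..<n})"

definition rnk :: "'a set \<Rightarrow> (nat \<times> ((nat \<Rightarrow> 'a) \<Rightarrow> 'a)) set \<Rightarrow> enat" where
  "rnk A F = (if \<exists>n f. (n, f) \<in> F \<and> \<not> is_proj A n f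
              then enat (LEAST n. \<exists>f. (n, f) \<in> F \<and> \<not> is_proj A n f) else \<infinity>)"

definition tuples_lt :: "'a set \<Rightarrow> nat \<Rightarrow> enat \<Rightarrow> (nat \<Rightarrow> 'a) set" where
  "tuples_lt A n r = {a \<in> tuples A n. enat (card (a ` {..<n})) < r}"

definition app_tuple :: "nat \<Rightarrow> ('a \<Rightarrow> 'a) \<Rightarrow> (nat \<Rightarrow> 'a) \<Rightarrow> (nat \<Rightarrow> 'a)" where
  "app_tuple n \<sigma> a = (\<lambda>i\<in>{..<n}. \<sigma> (a i))"

end

theory Submission
  imports Defs
begin

text \<open>Let \<open>k = |ran a| < r(F)\<close> and write \<open>a = b \<circ> \<pi>\<close> with \<open>b\<close> a \<open>k\<close>-tuple enumerating \<open>ran a\<close>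
  and \<open>\<pi> : n \<rightarrow> k\<close>. Then \<open>f(a)\<close> and \<open>f(\<sigma>(a))\<close> are the values at \<open>b\<close> and \<open>\<sigma>(b)\<close> of the
  \<open>k\<close>-ary minor \<open>x \<mapsto> f(x \<circ> \<pi>)\<close> of \<open>f\<close>. This minor lies in \<open>F\<close> and has arity below
  \<open>r(F)\<close>, so it is a projection, and projections commute with \<open>\<sigma>\<close>.\<close>

lemma is_proj_if_arity_less_rnk:
  assumes "(m, g) \<in> F" and "enat m < rnk A F"
  shows "is_proj A m g"
proof (rule ccontr)
  assume nonproj: "\<not> is_proj A m g"
  then have "(LEAST n. \<exists>f. (n, f) \<in> F \<and> \<not> is_proj A n f) \<le> m"
    using assms(1) by (intro Least_le) blast
  with nonproj assms show False
    unfolding rnk_def by (auto split: if_splits)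
qed

lemma app_tuple_in_tuples:
  assumes "c \<in> tuples A k" and "\<sigma> \<in> A \<rightarrow> A"
  shows "app_tuple k \<sigma> c \<in> tuples A k"
  using assms unfolding app_tuple_def tuples_def by auto

lemma proj_app_tuple:
  assumes "is_proj A k g" and "c \<in> tuples A k" and "\<sigma> \<in> A \<rightarrow> A"
  shows "g (app_tuple k \<sigma> c) = \<sigma> (g c)"
proof -
  obtain j where "j < k" and "g = proj A k j"
    using assms(1) unfolding is_proj_def by blast
  then show ?thesis
    using assms(2) app_tuple_in_tuples[OF assms(2,3)]
    unfolding proj_def app_tuple_def by simp
qed

lemma minor_in_clone:
  assumes "clone A F" and "(n, f) \<in> F" and "\<And>i. i < n \<Longrightarrow> \<pi> i < k"
  shows "(k, comp_op A n k f (\<lambda>i. proj A k (\<pi> i))) \<in> F"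
proof -
  have "(k, proj A k (\<pi> i)) \<in> F" if "i < n" for i
    using assms(1) assms(3)[OF that] unfolding clone_def by simp
  with assms(1,2) show ?thesis
    unfolding clone_def by simp
qed

lemma minor_apply:
  assumes "c \<in> tuples A k" and "\<And>i. i < n \<Longrightarrow> \<pi> i < k"
  shows "comp_op A n k f (\<lambda>i. proj A k (\<pi> i)) c = f (\<lambda>i\<in>{..<n}. c (\<pi> i))"
  using assms unfolding comp_op_def proj_def by (auto intro!: arg_cong[where f = f])

lemma tuple_factors_through_range:
  assumes "a \<in> tuples A n"
  obtains b \<pi> where "b \<in> tuples A (card (a ` {..<n}))"
    and "\<And>i. i < n \<Longrightarrow> \<pi> i < card (a ` {..<n})"
    and "a = (\<lambda>i\<in>{..<n}. b (\<pi> i))"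
proof -
  define k where "k = card (a ` {..<n})"
  obtain e where e: "bij_betw e {..<k} (a ` {..<n})"
    using ex_bij_betw_nat_finite[of "a ` {..<n}"] unfolding k_def
    by (auto simp: atLeast0LessThan)
  define \<pi> where "\<pi> i = the_inv_into {..<k} e (a i)" for i
  have \<pi>: "\<pi> i < k" "e (\<pi> i) = a i" if "i < n" for i
    using that e the_inv_into_into[of e "{..<k}" "a i"] f_the_inv_into_f_bij_betw[OF e]
    unfolding \<pi>_def by (auto simp: bij_betw_def)
  have "e ` {..<k} \<subseteq> A"
    using e assms unfolding tuples_def bij_betw_def by auto
  then have "restrict e {..<k} \<in> tuples A k"
    unfolding tuples_def by auto
  moreover have "a = (\<lambda>i\<in>{..<n}. restrict e {..<k} (\<pi> i))"
    using assms \<pi> unfolding tuples_def by (auto simp: PiE_def extensional_def)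
  ultimately show thesis
    using that[of "restrict e {..<k}" \<pi>] \<pi>(1) unfolding k_def by simp
qed

theorem claim1:
  fixes A :: "'a set" and F :: "(nat \<times> ((nat \<Rightarrow> 'a) \<Rightarrow> 'a)) set"
    and r :: enat and n :: nat and a :: "nat \<Rightarrow> 'a"
    and f :: "(nat \<Rightarrow> 'a) \<Rightarrow> 'a" and \<sigma> :: "'a \<Rightarrow> 'a"
  assumes "clone A F" and "conservative A F"
    and "rnk A F = r" and "r \<ge> 3"
    and "a \<in> tuples_lt A n r"
    and "(n, f) \<in> F"
    and "\<sigma> \<in> A \<rightarrow> A"
  shows "f (app_tuple n \<sigma> a) = \<sigma> (f a)"
proof -
  define k where "k = card (a ` {..<n})"
  have a: "a \<in> tuples A n" and "enat k < rnk A F"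
    using assms(3,5) unfolding tuples_lt_def k_def by auto
  obtain b \<pi> where b: "b \<in> tuples A k" and \<pi>: "\<And>i. i < n \<Longrightarrow> \<pi> i < k"
    and a_eq: "a = (\<lambda>i\<in>{..<n}. b (\<pi> i))"
    using tuple_factors_through_range[OF a, folded k_def] by blast
  define g where "g = comp_op A n k f (\<lambda>i. proj A k (\<pi> i))"
  have "is_proj A k g"
    using is_proj_if_arity_less_rnk[OF minor_in_clone[OF assms(1,6) \<pi>] \<open>enat k < rnk A F\<close>]
    unfolding g_def .
  have "app_tuple n \<sigma> a = (\<lambda>i\<in>{..<n}. app_tuple k \<sigma> b (\<pi> i))"
    using \<pi> unfolding a_eq app_tuple_def by (simp add: fun_eq_iff)
  then have "f (app_tuple n \<sigma> a) = g (app_tuple k \<sigma> b)"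
    using minor_apply[OF app_tuple_in_tuples[OF b assms(7)] \<pi>] unfolding g_def by simp
  also have "\<dots> = \<sigma> (g b)"
    using proj_app_tuple[OF \<open>is_proj A k g\<close> b assms(7)] .
  also have "g b = f a"
    using minor_apply[OF b \<pi>] unfolding g_def a_eq by simp
  finally show ?thesis .
qed

end
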